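(* Let $\Gamma\subseteq\mathbb{R}^D$ ($D\in[1,\infty]$) be orthosymmetric, convex and compact. Then for every $\epsilon>0$, $$D\Big(\Gamma,\frac{\epsilon}{D_{\mathsf c}(\Gamma,\epsilon)}\Big)\ge\frac{D_{\mathsf c}(\Gamma,\epsilon)}{2}-2.$$
   Context: Orthosymmetric: closed under flipping signs of any coordinates. Kolmogorov dimension $D(\Gamma,\epsilon)$: the smallest integer $d$ such that $\inf_{\Pi_d}\sup_{\boldsymbol\theta\in\Gamma}\|\boldsymbol\theta-\Pi_d\boldsymbol\theta\|_2\le\epsilon$, the infimum over all $d$-dimensional (orthogonal) linear projections $\Pi_d$. Coordinate-wise Kolmogorov dimension $D_{\mathsf c}(\Gamma,\epsilon)$: the smallest integer $d$ such that there is a set $A$ of $d$ coordinate indices with $\sup_{\boldsymbol\theta\in\Gamma}\sum_{i\notin A}\theta_i^2\le\epsilon^2$. *)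

theory Defs
  imports "HOL-Analysis.Analysis"
begin

text \<open>Ambient space: the sequence space l2 over a countable index type 'i.
  A finite type 'i gives R^D with D = CARD('i); 'i = nat gives D = infinity.\<close>

definition l2 :: "('i \<Rightarrow> real) set" where
  "l2 = {f. (\<lambda>i. (f i)\<^sup>2) summable_on UNIV}"

definition l2inner :: "('i \<Rightarrow> real) \<Rightarrow> ('i \<Rightarrow> real) \<Rightarrow> real" where
  "l2inner f g = (\<Sum>\<^sub>\<infinity>i. f i * g i)"

definition l2norm :: "('i \<Rightarrow> real) \<Rightarrow> real" where
  "l2norm f = sqrt (\<Sum>\<^sub>\<infinity>i. (f i)\<^sup>2)"

definition l2dist :: "('i \<Rightarrow> real) \<Rightarrow> ('i \<Rightarrow> real) \<Rightarrow> real" where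
  "l2dist f g = l2norm (\<lambda>i. f i - g i)"

definition l2_compact :: "('i \<Rightarrow> real) set \<Rightarrow> bool" where
  "l2_compact S \<longleftrightarrow> compactin (Metric_space.mtopology l2 l2dist) S"

definition orthosymmetric :: "('i \<Rightarrow> real) set \<Rightarrow> bool" where
  "orthosymmetric S \<longleftrightarrow>
     (\<forall>x\<in>S. \<forall>s::'i \<Rightarrow> bool. (\<lambda>i. if s i then - x i else x i) \<in> S)"

definition convex_fun_set :: "('i \<Rightarrow> real) set \<Rightarrow> bool" where
  "convex_fun_set S \<longleftrightarrow>
     (\<forall>x\<in>S. \<forall>y\<in>S. \<forall>t::real. 0 \<le> t \<and> t \<le> 1 \<longrightarrow> (\<lambda>i. t * x i + (1 - t) * y i) \<in> S)"

text \<open>Orthonormal families of d vectors in l2; their span is the range of a d-dimensional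
  orthogonal projection, and every such projection arises this way.\<close>
definition orthonormal_family :: "nat \<Rightarrow> (nat \<Rightarrow> ('i \<Rightarrow> real)) \<Rightarrow> bool" where
  "orthonormal_family d u \<longleftrightarrow>
     (\<forall>j<d. u j \<in> l2) \<and> (\<forall>j<d. \<forall>k<d. l2inner (u j) (u k) = (if j = k then 1 else 0))"

definition proj :: "nat \<Rightarrow> (nat \<Rightarrow> ('i \<Rightarrow> real)) \<Rightarrow> ('i \<Rightarrow> real) \<Rightarrow> ('i \<Rightarrow> real)" where
  "proj d u x = (\<lambda>i. \<Sum>j<d. l2inner x (u j) * u j i)"

definition kolmogorov_width :: "('i \<Rightarrow> real) set \<Rightarrow> nat \<Rightarrow> ereal" where
  "kolmogorov_width S d =
     (INF u\<in>{u. orthonormal_family d u}. SUP x\<in>S. ereal (l2norm (\<lambda>i. x i - proj d u x i)))"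

definition kolmogorov_dim :: "('i \<Rightarrow> real) set \<Rightarrow> real \<Rightarrow> nat" where
  "kolmogorov_dim S eps = (LEAST d. kolmogorov_width S d \<le> ereal eps)"

definition coord_kolmogorov_dim :: "('i \<Rightarrow> real) set \<Rightarrow> real \<Rightarrow> nat" where
  "coord_kolmogorov_dim S eps =
     (LEAST d. \<exists>A. finite A \<and> card A = d \<and>
        (\<forall>x\<in>S. (\<Sum>\<^sub>\<infinity>i\<in>- A. (x i)\<^sup>2) \<le> eps\<^sup>2))"

end

theory Submission
  imports Defs
begin

text \<open>Let \<open>m = D\<^sub>c(\<Gamma>, \<epsilon>)\<close>; in fact \<open>D(\<Gamma>, \<epsilon>/m) \<ge> m/2\<close> once \<open>m > 2\<close>.
  By compactness \<open>k = D(\<Gamma>, \<epsilon>/m)\<close> is finite, so some rank-\<open>k\<close> orthogonal projection \<open>P\<close>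
  leaves residuals below \<open>\<epsilon>/2\<close> on \<open>\<Gamma>\<close>. Since \<open>P\<close> has trace \<open>k\<close>, at most \<open>2k\<close>
  coordinates are heavy, i.e. have \<open>\<parallel>P e\<^sub>i\<parallel>\<^sup>2 \<ge> 1/2\<close>. For \<open>\<theta> \<in> \<Gamma>\<close> and a finite set \<open>F\<close> of
  light coordinates, orthosymmetry and convexity put the restriction of \<open>\<theta>\<close> to \<open>F\<close>, with
  arbitrary signs, into \<open>\<Gamma>\<close>; for suitable signs \<open>\<parallel>P x\<parallel>\<^sup>2 \<le> \<Sum>\<^sub>i\<^sub>\<in>\<^sub>F \<theta>\<^sub>i\<^sup>2 \<parallel>P e\<^sub>i\<parallel>\<^sup>2\<close>,
  whence \<open>\<Sum>\<^sub>i\<^sub>\<in>\<^sub>F \<theta>\<^sub>i\<^sup>2 \<le> 2 \<parallel>x - P x\<parallel>\<^sup>2 < \<epsilon>\<^sup>2\<close>. So the heavy coordinates show \<open>m \<le> 2k\<close>.\<close>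

lemma l2_square_summable_on: "f \<in> l2 \<Longrightarrow> (\<lambda>i. (f i)\<^sup>2) summable_on A"
  unfolding l2_def using summable_on_subset by blast

lemma l2_mult_summable_on:
  assumes "f \<in> l2" "g \<in> l2"
  shows "(\<lambda>i. f i * g i) summable_on A"
proof -
  have sq: "(\<lambda>i. (f i)\<^sup>2 + (g i)\<^sup>2) summable_on A"
    using assms by (intro summable_on_add l2_square_summable_on)
  have bound: "norm (f i * g i) \<le> (f i)\<^sup>2 + (g i)\<^sup>2" for i
  proof -
    have "2 * \<bar>f i\<bar> * \<bar>g i\<bar> \<le> (f i)\<^sup>2 + (g i)\<^sup>2"
      using sum_squares_bound[of "\<bar>f i\<bar>" "\<bar>g i\<bar>"] by simp
    moreover have "0 \<le> \<bar>f i\<bar> * \<bar>g i\<bar>" by simp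
    ultimately show ?thesis unfolding real_norm_def abs_mult by linarith
  qed
  have "(\<lambda>i. norm (f i * g i)) summable_on A"
    using sq bound by (rule summable_on_comparison_test) simp
  then show ?thesis
    using summable_on_iff_abs_summable_on_real by blast
qed

lemma l2_lincomb: "f \<in> l2 \<Longrightarrow> g \<in> l2 \<Longrightarrow> (\<lambda>i. a * f i + b * g i) \<in> l2"
proof -
  assume "f \<in> l2" "g \<in> l2"
  then have "(\<lambda>i. a\<^sup>2 * (f i)\<^sup>2 + (2 * a * b) * (f i * g i) + b\<^sup>2 * (g i)\<^sup>2) summable_on UNIV"
    by (intro summable_on_add summable_on_cmult_right l2_square_summable_on l2_mult_summable_on)
  then show ?thesis
    unfolding l2_def by (simp add: power2_eq_square algebra_simps)
qed

lemma l2_diff: "f \<in> l2 \<Longrightarrow> g \<in> l2 \<Longrightarrow> (\<lambda>i. f i - g i) \<in> l2"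
  using l2_lincomb[of f g 1 "-1"] by simp

lemma l2_sum: "(\<And>j. j \<in> J \<Longrightarrow> f j \<in> l2) \<Longrightarrow> (\<lambda>i. \<Sum>j\<in>J. a j * f j i) \<in> l2"
proof (induction J rule: infinite_finite_induct)
  case (insert j J)
  then show ?case
    using l2_lincomb[of "f j" "\<lambda>i. \<Sum>j\<in>J. a j * f j i" "a j" 1] by simp
qed (simp_all add: l2_def)

lemma infsum_eq_sum_if_vanishing:
  assumes "finite F" "\<And>i. i \<notin> F \<Longrightarrow> g i = (0::real)"
  shows "infsum g UNIV = sum g F"
  using infsum_cong_neutral[of F UNIV g g] assms by simp

lemma l2_if_finite_support:
  assumes "finite F" "\<And>i. i \<notin> F \<Longrightarrow> f i = 0"
  shows "f \<in> l2"
  unfolding l2_def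
  using summable_on_cong_neutral[of F UNIV "\<lambda>i. (f i)\<^sup>2"] assms by auto

lemma has_sum_sum:
  fixes f :: "'j \<Rightarrow> 'i \<Rightarrow> real"
  assumes "finite J" "\<And>j. j \<in> J \<Longrightarrow> (f j has_sum s j) A"
  shows "((\<lambda>i. \<Sum>j\<in>J. f j i) has_sum (\<Sum>j\<in>J. s j)) A"
  using assms by (induction J rule: finite_induct) (auto intro: has_sum_add)

lemma l2inner_commute: "l2inner f g = l2inner g f"
  unfolding l2inner_def by (simp add: mult.commute)

lemma l2inner_self: "l2inner f f = (\<Sum>\<^sub>\<infinity>i. (f i)\<^sup>2)"
  unfolding l2inner_def by (simp add: power2_eq_square)

lemma l2inner_sum_right:
  assumes "finite J" "f \<in> l2" "\<And>j. j \<in> J \<Longrightarrow> g j \<in> l2"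
  shows "l2inner f (\<lambda>i. \<Sum>j\<in>J. a j * g j i) = (\<Sum>j\<in>J. a j * l2inner f (g j))"
proof -
  have "((\<lambda>i. a j * (f i * g j i)) has_sum a j * l2inner f (g j)) UNIV" if "j \<in> J" for j
    unfolding l2inner_def
    using assms that by (intro has_sum_cmult_right has_sum_infsum l2_mult_summable_on)
  then have "((\<lambda>i. \<Sum>j\<in>J. a j * (f i * g j i)) has_sum (\<Sum>j\<in>J. a j * l2inner f (g j))) UNIV"
    by (rule has_sum_sum[OF assms(1)])
  then show ?thesis
    unfolding l2inner_def by (simp add: infsumI sum_distrib_left mult_ac)
qed

lemma l2norm_diff_squared:
  assumes "f \<in> l2" "g \<in> l2"
  shows "(l2norm (\<lambda>i. f i - g i))\<^sup>2 = l2inner f f - 2 * l2inner f g + l2inner g g"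
proof -
  have "((\<lambda>i. f i * f i + (-2) * (f i * g i) + g i * g i)
      has_sum (l2inner f f + (-2) * l2inner f g + l2inner g g)) UNIV"
    unfolding l2inner_def using assms
    by (intro has_sum_add has_sum_cmult_right has_sum_infsum l2_mult_summable_on)
  then have "(\<Sum>\<^sub>\<infinity>i. (f i - g i)\<^sup>2) = l2inner f f - 2 * l2inner f g + l2inner g g"
    by (simp add: infsumI power2_eq_square algebra_simps)
  moreover have "0 \<le> (\<Sum>\<^sub>\<infinity>i. (f i - g i)\<^sup>2)"
    by (rule infsum_nonneg) simp
  ultimately show ?thesis
    unfolding l2norm_def by simp
qed

section \<open>Orthogonal projections\<close>

lemma orthonormal_familyD:
  assumes "orthonormal_family d u" "j < d"
  shows "u j \<in> l2" "k < d \<Longrightarrow> l2inner (u j) (u k) = (if j = k then 1 else 0)"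
  using assms unfolding orthonormal_family_def by auto

lemma proj_in_l2: "orthonormal_family d u \<Longrightarrow> proj d u x \<in> l2"
  unfolding proj_def by (rule l2_sum) (auto dest: orthonormal_familyD)

lemma l2inner_proj_right:
  assumes "orthonormal_family d u" "f \<in> l2"
  shows "l2inner f (proj d u x) = (\<Sum>j<d. l2inner x (u j) * l2inner f (u j))"
  unfolding proj_def using assms by (intro l2inner_sum_right) (auto dest: orthonormal_familyD)

lemma l2inner_orthonormal_proj:
  assumes "orthonormal_family d u" "k < d"
  shows "l2inner (u k) (proj d u x) = l2inner x (u k)"
proof -
  have "l2inner (u k) (proj d u x) = (\<Sum>j<d. l2inner x (u j) * (if k = j then 1 else 0))"
    using assms by (simp add: l2inner_proj_right orthonormal_familyD)
  also have "\<dots> = l2inner x (u k)"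
    using assms(2) by (simp add: if_distrib sum.delta cong: if_cong)
  finally show ?thesis .
qed

lemma l2norm_residual_squared:
  assumes on: "orthonormal_family d u" and x: "x \<in> l2"
  shows "(l2norm (\<lambda>i. x i - proj d u x i))\<^sup>2 = (\<Sum>\<^sub>\<infinity>i. (x i)\<^sup>2) - (\<Sum>j<d. (l2inner x (u j))\<^sup>2)"
proof -
  have "l2inner x (proj d u x) = (\<Sum>j<d. (l2inner x (u j))\<^sup>2)"
    using l2inner_proj_right[OF on x] by (simp add: power2_eq_square)
  moreover have "l2inner (proj d u x) (proj d u x) = (\<Sum>j<d. (l2inner x (u j))\<^sup>2)"
    using l2inner_proj_right[OF on proj_in_l2[OF on]] l2inner_orthonormal_proj[OF on]
    by (simp add: l2inner_commute[of "proj d u x"] power2_eq_square)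
  ultimately show ?thesis
    using l2norm_diff_squared[OF x proj_in_l2[OF on]] by (simp add: l2inner_self)
qed

section \<open>Heavy and light coordinates\<close>

definition sign_of :: "bool \<Rightarrow> real" where
  "sign_of b = (if b then -1 else 1)"

text \<open>Greedy choice of signs: each new sign is chosen so that the cross term is nonpositive.\<close>
lemma exists_signs_sum_squares_le:
  fixes a :: "'i \<Rightarrow> nat \<Rightarrow> real"
  assumes "finite F"
  shows "\<exists>s. (\<Sum>j<d. (\<Sum>i\<in>F. sign_of (s i) * a i j)\<^sup>2) \<le> (\<Sum>i\<in>F. \<Sum>j<d. (a i j)\<^sup>2)"
  using assms
proof (induction F rule: finite_induct)
  case empty
  then show ?case by simp
next
  case (insert x F)
  then obtain s where s: "(\<Sum>j<d. (\<Sum>i\<in>F. sign_of (s i) * a i j)\<^sup>2) \<le> (\<Sum>i\<in>F. \<Sum>j<d. (a i j)\<^sup>2)"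
    by blast
  define S where "S j = (\<Sum>i\<in>F. sign_of (s i) * a i j)" for j
  define b where "b = ((\<Sum>j<d. S j * a x j) > 0)"
  have cross: "sign_of b * (\<Sum>j<d. S j * a x j) \<le> 0"
    unfolding b_def sign_of_def by auto
  have sign_sq: "sign_of b * (sign_of b * y) = y" for y
    unfolding sign_of_def by simp
  have "(\<Sum>i\<in>F. sign_of ((s(x := b)) i) * a i j) = S j" for j
    unfolding S_def using insert(2) by (intro sum.cong) auto
  then have "(\<Sum>j<d. (\<Sum>i\<in>insert x F. sign_of ((s(x := b)) i) * a i j)\<^sup>2)
      = (\<Sum>j<d. (sign_of b * a x j + S j)\<^sup>2)"
    using insert(1,2) by simp
  also have "\<dots> = (\<Sum>j<d. (S j)\<^sup>2) + 2 * (sign_of b * (\<Sum>j<d. S j * a x j)) + (\<Sum>j<d. (a x j)\<^sup>2)"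
    by (simp add: power2_eq_square algebra_simps sum.distrib sum_distrib_left sign_sq)
  also have "\<dots> \<le> (\<Sum>i\<in>insert x F. \<Sum>j<d. (a i j)\<^sup>2)"
    using s cross insert(1,2) unfolding S_def by simp
  finally show ?case by blast
qed

lemma orthosymmetricD:
  "orthosymmetric \<Gamma> \<Longrightarrow> x \<in> \<Gamma> \<Longrightarrow> (\<lambda>i. if s i then - x i else x i) \<in> \<Gamma>"
  unfolding orthosymmetric_def by blast

lemma convex_fun_setD:
  "convex_fun_set \<Gamma> \<Longrightarrow> x \<in> \<Gamma> \<Longrightarrow> y \<in> \<Gamma> \<Longrightarrow> 0 \<le> t \<Longrightarrow> t \<le> 1
    \<Longrightarrow> (\<lambda>i. t * x i + (1 - t) * y i) \<in> \<Gamma>"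
  unfolding convex_fun_set_def by blast

lemma orthosymmetric_convex_restrict:
  assumes "orthosymmetric \<Gamma>" "convex_fun_set \<Gamma>" "\<theta> \<in> \<Gamma>"
  shows "(\<lambda>i. if i \<in> F then \<theta> i else 0) \<in> \<Gamma>"
proof -
  have "(\<lambda>i. if i \<notin> F then - \<theta> i else \<theta> i) \<in> \<Gamma>"
    using orthosymmetricD[OF assms(1,3)] .
  then have "(\<lambda>i. (1/2) * \<theta> i + (1 - 1/2) * (if i \<notin> F then - \<theta> i else \<theta> i)) \<in> \<Gamma>"
    by (rule convex_fun_setD[OF assms(2,3)]) simp_all
  moreover have "(\<lambda>i. (1/2) * \<theta> i + (1 - 1/2) * (if i \<notin> F then - \<theta> i else \<theta> i))
      = (\<lambda>i. if i \<in> F then \<theta> i else 0)"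
    by auto
  ultimately show ?thesis by simp
qed

text \<open>The diagonal entry \<open>\<langle>P e\<^sub>i, e\<^sub>i\<rangle> = \<parallel>P e\<^sub>i\<parallel>\<^sup>2\<close> of the projection \<open>P\<close> onto the span of
  \<open>u 0, \<dots>, u (d - 1)\<close>.\<close>
definition proj_diag :: "nat \<Rightarrow> (nat \<Rightarrow> 'i \<Rightarrow> real) \<Rightarrow> 'i \<Rightarrow> real" where
  "proj_diag d u i = (\<Sum>j<d. (u j i)\<^sup>2)"

lemma sum_proj_diag_le:
  assumes "orthonormal_family d u" "finite G"
  shows "(\<Sum>i\<in>G. proj_diag d u i) \<le> d"
proof -
  have "(\<Sum>i\<in>G. (u j i)\<^sup>2) \<le> 1" if "j < d" for j
  proof -
    have "(\<Sum>\<^sub>\<infinity>i. (u j i)\<^sup>2) = 1"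
      using orthonormal_familyD[OF assms(1) that] that by (simp add: l2inner_self[symmetric])
    then show ?thesis
      using finite_sum_le_infsum[OF l2_square_summable_on[OF orthonormal_familyD(1)[OF assms(1) that]]
          assms(2), of UNIV] by simp
  qed
  then have "(\<Sum>j<d. \<Sum>i\<in>G. (u j i)\<^sup>2) \<le> (\<Sum>j<d. 1)"
    by (intro sum_mono) simp
  then show ?thesis
    unfolding proj_diag_def by (simp add: sum.swap[of _ G])
qed

lemma card_heavy_coords_le:
  assumes on: "orthonormal_family d u" and t: "t > 0"
  shows "finite {i. t \<le> proj_diag d u i}" and "t * card {i. t \<le> proj_diag d u i} \<le> d"
proof -
  define A where "A = {i. t \<le> proj_diag d u i}"
  have card_le: "t * card G \<le> d" if "finite G" "G \<subseteq> A" for G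
  proof -
    have "t * card G = (\<Sum>i\<in>G. t)" by simp
    also have "\<dots> \<le> (\<Sum>i\<in>G. proj_diag d u i)"
      using that by (intro sum_mono) (auto simp: A_def)
    also have "\<dots> \<le> d" by (rule sum_proj_diag_le[OF on that(1)])
    finally show ?thesis .
  qed
  show "finite A"
  proof (rule ccontr)
    assume "infinite A"
    obtain n where n: "real d < real n * t"
      using ex_less_of_nat_mult[OF t] by blast
    obtain G where "finite G" "card G = n" "G \<subseteq> A"
      using infinite_arbitrarily_large[OF \<open>infinite A\<close>] by blast
    then have "t * n \<le> d"
      using card_le by blast
    with n show False
      by (simp add: mult.commute)
  qed
  then show "t * card A \<le> d" by (rule card_le) simp
qed

lemma sum_squares_light_coords_le:
  fixes \<Gamma> :: "('i \<Rightarrow> real) set"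
  assumes orth: "orthosymmetric \<Gamma>" and conv: "convex_fun_set \<Gamma>"
    and on: "orthonormal_family d u"
    and residual: "\<And>x. x \<in> \<Gamma> \<Longrightarrow> l2norm (\<lambda>i. x i - proj d u x i) \<le> \<delta>"
    and \<theta>: "\<theta> \<in> \<Gamma>" and F: "finite F"
    and light: "\<And>i. i \<in> F \<Longrightarrow> proj_diag d u i \<le> 1/2"
  shows "(\<Sum>i\<in>F. (\<theta> i)\<^sup>2) \<le> 2 * \<delta>\<^sup>2"
proof -
  define a where "a i j = \<theta> i * u j i" for i j
  obtain s where s: "(\<Sum>j<d. (\<Sum>i\<in>F. sign_of (s i) * a i j)\<^sup>2) \<le> (\<Sum>i\<in>F. \<Sum>j<d. (a i j)\<^sup>2)"
    using exists_signs_sum_squares_le[OF F] by blast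
  define \<theta>\<^sub>F where "\<theta>\<^sub>F i = (if i \<in> F then \<theta> i else 0)" for i
  define x where "x i = (if s i then - \<theta>\<^sub>F i else \<theta>\<^sub>F i)" for i
  have x\<Gamma>: "x \<in> \<Gamma>"
    unfolding x_def \<theta>\<^sub>F_def
    by (intro orthosymmetricD[OF orth] orthosymmetric_convex_restrict orth conv \<theta>)
  have x_vanishes: "x i = 0" if "i \<notin> F" for i
    using that by (simp add: x_def \<theta>\<^sub>F_def)
  have "(\<Sum>\<^sub>\<infinity>i. (x i)\<^sup>2) = (\<Sum>i\<in>F. (x i)\<^sup>2)"
    by (rule infsum_eq_sum_if_vanishing[OF F]) (simp add: x_vanishes)
  also have "\<dots> = (\<Sum>i\<in>F. (\<theta> i)\<^sup>2)"
    by (rule sum.cong) (auto simp: x_def \<theta>\<^sub>F_def)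
  moreover have "l2inner x (u j) = (\<Sum>i\<in>F. sign_of (s i) * a i j)" for j
  proof -
    have "l2inner x (u j) = (\<Sum>i\<in>F. x i * u j i)"
      unfolding l2inner_def by (rule infsum_eq_sum_if_vanishing[OF F]) (simp add: x_vanishes)
    also have "\<dots> = (\<Sum>i\<in>F. sign_of (s i) * a i j)"
      by (rule sum.cong) (auto simp: x_def \<theta>\<^sub>F_def a_def sign_of_def)
    finally show ?thesis .
  qed
  ultimately have "(l2norm (\<lambda>i. x i - proj d u x i))\<^sup>2
      = (\<Sum>i\<in>F. (\<theta> i)\<^sup>2) - (\<Sum>j<d. (\<Sum>i\<in>F. sign_of (s i) * a i j)\<^sup>2)"
    using l2norm_residual_squared[OF on l2_if_finite_support[OF F x_vanishes]] by simp
  moreover have "(l2norm (\<lambda>i. x i - proj d u x i))\<^sup>2 \<le> \<delta>\<^sup>2"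
    using residual[OF x\<Gamma>] by (intro power_mono) (simp_all add: l2norm_def infsum_nonneg)
  moreover have "(\<Sum>i\<in>F. \<Sum>j<d. (a i j)\<^sup>2) \<le> (\<Sum>i\<in>F. (\<theta> i)\<^sup>2) / 2"
  proof -
    have "(\<Sum>i\<in>F. \<Sum>j<d. (a i j)\<^sup>2) = (\<Sum>i\<in>F. (\<theta> i)\<^sup>2 * proj_diag d u i)"
      unfolding a_def proj_diag_def by (simp add: power_mult_distrib sum_distrib_left)
    also have "\<dots> \<le> (\<Sum>i\<in>F. (\<theta> i)\<^sup>2 * (1/2))"
      using light by (intro sum_mono mult_left_mono) auto
    finally show ?thesis by (simp add: sum_divide_distrib)
  qed
  ultimately show ?thesis
    using s by linarith
qed

lemma coord_kolmogorov_dim_le_twice: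
  fixes \<Gamma> :: "('i \<Rightarrow> real) set"
  assumes orth: "orthosymmetric \<Gamma>" and conv: "convex_fun_set \<Gamma>" and l2: "\<Gamma> \<subseteq> l2"
    and width: "kolmogorov_width \<Gamma> k < ereal \<eta>" and \<epsilon>: "2 * \<eta>\<^sup>2 \<le> \<epsilon>\<^sup>2"
  shows "coord_kolmogorov_dim \<Gamma> \<epsilon> \<le> 2 * k"
proof -
  obtain u where on: "orthonormal_family k u"
    and "(SUP x\<in>\<Gamma>. ereal (l2norm (\<lambda>i. x i - proj k u x i))) < ereal \<eta>"
    using width unfolding kolmogorov_width_def INF_less_iff by auto
  then have residual: "l2norm (\<lambda>i. x i - proj k u x i) \<le> \<eta>" if "x \<in> \<Gamma>" for x
    using SUP_lessD that by fastforce
  define A where "A = {i. 1/2 \<le> proj_diag k u i}"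
  have A: "finite A" "card A \<le> 2 * k"
    using card_heavy_coords_le[OF on, of "1/2"] unfolding A_def by auto
  have "(\<Sum>\<^sub>\<infinity>i\<in>- A. (\<theta> i)\<^sup>2) \<le> \<epsilon>\<^sup>2" if \<theta>: "\<theta> \<in> \<Gamma>" for \<theta>
  proof (rule infsum_le_finite_sums)
    show "(\<lambda>i. (\<theta> i)\<^sup>2) summable_on - A"
      using \<theta> l2 by (auto intro: l2_square_summable_on)
    fix F assume "finite F" "F \<subseteq> - A"
    then have "(\<Sum>i\<in>F. (\<theta> i)\<^sup>2) \<le> 2 * \<eta>\<^sup>2"
      by (intro sum_squares_light_coords_le[OF orth conv on residual \<theta>]) (auto simp: A_def)
    with \<epsilon> show "(\<Sum>i\<in>F. (\<theta> i)\<^sup>2) \<le> \<epsilon>\<^sup>2" by linarith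
  qed
  then have "coord_kolmogorov_dim \<Gamma> \<epsilon> \<le> card A"
    unfolding coord_kolmogorov_dim_def using A(1) by (intro Least_le) blast
  with A(2) show ?thesis by linarith
qed

section \<open>Coordinate projections\<close>

definition coord_family :: "(nat \<Rightarrow> 'i) \<Rightarrow> nat \<Rightarrow> 'i \<Rightarrow> real" where
  "coord_family e j i = (if i = e j then 1 else 0)"

lemma l2inner_coord_family: "l2inner x (coord_family e j) = x (e j)"
proof -
  have "l2inner x (coord_family e j) = (\<Sum>i\<in>{e j}. x i * coord_family e j i)"
    unfolding l2inner_def by (rule infsum_eq_sum_if_vanishing) (auto simp: coord_family_def)
  then show ?thesis by (simp add: coord_family_def)
qed

lemma orthonormal_coord_family:
  assumes "inj_on e {..<d}"
  shows "orthonormal_family d (coord_family e)"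
  unfolding orthonormal_family_def
proof (intro conjI allI impI)
  show "coord_family e j \<in> l2" for j
    by (rule l2_if_finite_support[of "{e j}"]) (auto simp: coord_family_def)
  show "l2inner (coord_family e j) (coord_family e k) = (if j = k then 1 else 0)"
    if "j < d" "k < d" for j k
    using assms that unfolding l2inner_coord_family coord_family_def inj_on_def by auto
qed

lemma proj_coord_family:
  assumes "inj_on e {..<d}"
  shows "proj d (coord_family e) x i = (if i \<in> e ` {..<d} then x i else 0)"
proof -
  have "proj d (coord_family e) x i = (\<Sum>j<d. (\<lambda>a. if i = a then x a else 0) (e j))"
    unfolding proj_def l2inner_coord_family coord_family_def by (intro sum.cong) auto
  also have "\<dots> = (\<Sum>a\<in>e ` {..<d}. if i = a then x a else 0)"
    using sum.reindex[OF assms, of "\<lambda>a. if i = a then x a else 0"] by simp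
  finally show ?thesis by (simp add: sum.delta)
qed

lemma kolmogorov_width_le_coord_tail:
  fixes \<Gamma> :: "('i \<Rightarrow> real) set"
  assumes A: "finite A" and tails: "\<And>x. x \<in> \<Gamma> \<Longrightarrow> (\<Sum>\<^sub>\<infinity>i\<in>- A. (x i)\<^sup>2) \<le> \<eta>\<^sup>2"
    and \<eta>: "\<eta> \<ge> 0"
  shows "kolmogorov_width \<Gamma> (card A) \<le> ereal \<eta>"
proof -
  obtain e where e: "bij_betw e {..<card A} A"
    using ex_bij_betw_nat_finite[OF A] by (auto simp: atLeast0LessThan)
  then have inj: "inj_on e {..<card A}" and image: "e ` {..<card A} = A"
    by (auto simp: bij_betw_def)
  have "l2norm (\<lambda>i. x i - proj (card A) (coord_family e) x i) \<le> \<eta>" if "x \<in> \<Gamma>" for x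
  proof -
    have "(\<Sum>\<^sub>\<infinity>i. (x i - proj (card A) (coord_family e) x i)\<^sup>2) = (\<Sum>\<^sub>\<infinity>i\<in>- A. (x i)\<^sup>2)"
      by (rule infsum_cong_neutral) (auto simp: proj_coord_family[OF inj] image)
    then show ?thesis
      unfolding l2norm_def using real_sqrt_le_mono[OF tails[OF that]] \<eta> by simp
  qed
  then have "(SUP x\<in>\<Gamma>. ereal (l2norm (\<lambda>i. x i - proj (card A) (coord_family e) x i))) \<le> ereal \<eta>"
    by (intro SUP_least) simp
  then show ?thesis
    unfolding kolmogorov_width_def
    by (meson INF_lower2 mem_Collect_eq orthonormal_coord_family[OF inj])
qed

section \<open>Compact sets have uniformly small tails\<close>

lemma l2_minkowski:
  assumes f: "f \<in> l2" and g: "g \<in> l2"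
  shows "sqrt (\<Sum>\<^sub>\<infinity>i\<in>B. (f i + g i)\<^sup>2)
     \<le> sqrt (\<Sum>\<^sub>\<infinity>i\<in>B. (f i)\<^sup>2) + sqrt (\<Sum>\<^sub>\<infinity>i\<in>B. (g i)\<^sup>2)"
proof -
  define b where "b = sqrt (\<Sum>\<^sub>\<infinity>i\<in>B. (f i)\<^sup>2) + sqrt (\<Sum>\<^sub>\<infinity>i\<in>B. (g i)\<^sup>2)"
  have fg: "(\<lambda>i. f i + g i) \<in> l2"
    using l2_lincomb[OF f g, of 1 1] by simp
  have b: "0 \<le> b"
    unfolding b_def by (intro add_nonneg_nonneg real_sqrt_ge_zero infsum_nonneg) auto
  have "(\<Sum>\<^sub>\<infinity>i\<in>B. (f i + g i)\<^sup>2) \<le> b\<^sup>2"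
  proof (rule infsum_le_finite_sums[OF l2_square_summable_on[OF fg]])
    fix F assume F: "finite F" "F \<subseteq> B"
    have "L2_set f F \<le> sqrt (\<Sum>\<^sub>\<infinity>i\<in>B. (f i)\<^sup>2)" "L2_set g F \<le> sqrt (\<Sum>\<^sub>\<infinity>i\<in>B. (g i)\<^sup>2)"
      unfolding L2_set_def
      using finite_sum_le_infsum[OF l2_square_summable_on F] f g by auto
    then have "L2_set (\<lambda>i. f i + g i) F \<le> b"
      using L2_set_triangle_ineq[of f g F] unfolding b_def by linarith
    then have "(L2_set (\<lambda>i. f i + g i) F)\<^sup>2 \<le> b\<^sup>2"
      by (intro power_mono L2_set_nonneg)
    then show "(\<Sum>i\<in>F. (f i + g i)\<^sup>2) \<le> b\<^sup>2"
      unfolding L2_set_def by (simp add: sum_nonneg)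
  qed
  then have "sqrt (\<Sum>\<^sub>\<infinity>i\<in>B. (f i + g i)\<^sup>2) \<le> sqrt (b\<^sup>2)"
    by (rule real_sqrt_le_mono)
  then show ?thesis
    using b unfolding b_def by simp
qed

lemma l2_metric: "Metric_space l2 l2dist"
proof
  fix x y z :: "'i \<Rightarrow> real"
  show "0 \<le> l2dist x y"
    unfolding l2dist_def l2norm_def by (intro real_sqrt_ge_zero infsum_nonneg) auto
  show "l2dist x y = l2dist y x"
    unfolding l2dist_def l2norm_def by (simp add: power2_commute)
  assume x: "x \<in> l2" and y: "y \<in> l2"
  show "l2dist x y = 0 \<longleftrightarrow> x = y"
  proof
    assume "l2dist x y = 0"
    then have "(\<Sum>\<^sub>\<infinity>i. (x i - y i)\<^sup>2) \<le> 0"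
      unfolding l2dist_def l2norm_def using infsum_nonneg[of UNIV "\<lambda>i. (x i - y i)\<^sup>2"] by simp
    then have "(x i - y i)\<^sup>2 = 0" for i
      by (rule nonneg_infsum_le_0D[OF _ l2_square_summable_on[OF l2_diff[OF x y]]]) auto
    then show "x = y" by auto
  qed (simp add: l2dist_def l2norm_def)
  assume z: "z \<in> l2"
  show "l2dist x z \<le> l2dist x y + l2dist y z"
    using l2_minkowski[OF l2_diff[OF x y] l2_diff[OF y z], of UNIV]
    unfolding l2dist_def l2norm_def by simp
qed

lemma l2_compact_subset: "l2_compact \<Gamma> \<Longrightarrow> \<Gamma> \<subseteq> l2"
proof -
  interpret Metric_space l2 l2dist by (rule l2_metric)
  show "l2_compact \<Gamma> \<Longrightarrow> \<Gamma> \<subseteq> l2"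
    unfolding l2_compact_def using compactin_subset_topspace by fastforce
qed

lemma l2_small_tail:
  assumes "f \<in> l2" "e > 0"
  shows "\<exists>A. finite A \<and> (\<Sum>\<^sub>\<infinity>i\<in>- A. (f i)\<^sup>2) \<le> e"
proof -
  have summable: "(\<lambda>i. (f i)\<^sup>2) summable_on B" for B
    using l2_square_summable_on[OF assms(1)] .
  obtain F where F: "finite F" "dist (\<Sum>i\<in>F. (f i)\<^sup>2) (\<Sum>\<^sub>\<infinity>i. (f i)\<^sup>2) \<le> e"
    using infsum_finite_approximation[OF summable assms(2)] by blast
  have "(\<Sum>\<^sub>\<infinity>i\<in>- F. (f i)\<^sup>2) \<le> e"
  proof (rule infsum_le_finite_sums[OF summable])
    fix G assume G: "finite G" "G \<subseteq> - F"
    then have "(\<Sum>i\<in>G. (f i)\<^sup>2) + (\<Sum>i\<in>F. (f i)\<^sup>2) = (\<Sum>i\<in>G \<union> F. (f i)\<^sup>2)"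
      using F(1) by (subst sum.union_disjoint) auto
    also have "\<dots> \<le> (\<Sum>\<^sub>\<infinity>i. (f i)\<^sup>2)"
      using G F(1) by (intro finite_sum_le_infsum[OF summable]) auto
    finally show "(\<Sum>i\<in>G. (f i)\<^sup>2) \<le> e"
      using F(2) unfolding dist_real_def by linarith
  qed
  with F(1) show ?thesis by blast
qed

lemma l2_tail_le_dist_plus_tail:
  assumes x: "x \<in> l2" and c: "c \<in> l2"
  shows "sqrt (\<Sum>\<^sub>\<infinity>i\<in>B. (x i)\<^sup>2) \<le> l2dist c x + sqrt (\<Sum>\<^sub>\<infinity>i\<in>B. (c i)\<^sup>2)"
proof -
  have "sqrt (\<Sum>\<^sub>\<infinity>i\<in>B. (x i)\<^sup>2) \<le> sqrt (\<Sum>\<^sub>\<infinity>i\<in>B. (x i - c i)\<^sup>2) + sqrt (\<Sum>\<^sub>\<infinity>i\<in>B. (c i)\<^sup>2)"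
    using l2_minkowski[OF l2_diff[OF x c] c, of B] by simp
  moreover have "(\<Sum>\<^sub>\<infinity>i\<in>B. (x i - c i)\<^sup>2) \<le> (\<Sum>\<^sub>\<infinity>i. (x i - c i)\<^sup>2)"
    using x c by (intro infsum_mono2 l2_square_summable_on l2_diff) auto
  then have "sqrt (\<Sum>\<^sub>\<infinity>i\<in>B. (x i - c i)\<^sup>2) \<le> sqrt (\<Sum>\<^sub>\<infinity>i. (x i - c i)\<^sup>2)"
    by (rule real_sqrt_le_mono)
  moreover have "l2dist c x = sqrt (\<Sum>\<^sub>\<infinity>i. (x i - c i)\<^sup>2)"
    unfolding l2dist_def l2norm_def by (simp add: power2_commute)
  ultimately show ?thesis
    by linarith
qed

text \<open>Cover \<open>\<Gamma>\<close> by finitely many \<open>\<eta>/2\<close>-balls; the centres have a common finite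
  set of coordinates outside which their tails are at most \<open>\<eta>/2\<close>.\<close>
lemma l2_compact_uniform_tails:
  fixes \<Gamma> :: "('i \<Rightarrow> real) set"
  assumes cpt: "l2_compact \<Gamma>" and \<eta>: "\<eta> > 0"
  obtains A where "finite A" "\<And>x. x \<in> \<Gamma> \<Longrightarrow> (\<Sum>\<^sub>\<infinity>i\<in>- A. (x i)\<^sup>2) \<le> \<eta>\<^sup>2"
proof -
  interpret M: Metric_space l2 l2dist by (rule l2_metric)
  have \<Gamma>: "\<Gamma> \<subseteq> l2" by (rule l2_compact_subset[OF cpt])
  have "M.mtotally_bounded \<Gamma>"
    using cpt unfolding l2_compact_def by (rule M.compactin_imp_mtotally_bounded)
  then obtain K where K: "finite K" "K \<subseteq> \<Gamma>" "\<Gamma> \<subseteq> (\<Union>c\<in>K. M.mball c (\<eta>/2))"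
    unfolding M.mtotally_bounded_def using \<eta> by (meson half_gt_zero)
  have "\<exists>B. finite B \<and> (\<Sum>\<^sub>\<infinity>i\<in>- B. (c i)\<^sup>2) \<le> (\<eta>/2)\<^sup>2" if "c \<in> K" for c
    using that K(2) \<Gamma> \<eta> by (intro l2_small_tail) auto
  then obtain B where B: "\<And>c. c \<in> K \<Longrightarrow> finite (B c) \<and> (\<Sum>\<^sub>\<infinity>i\<in>- B c. (c i)\<^sup>2) \<le> (\<eta>/2)\<^sup>2"
    by metis
  define A where "A = (\<Union>c\<in>K. B c)"
  have "(\<Sum>\<^sub>\<infinity>i\<in>- A. (x i)\<^sup>2) \<le> \<eta>\<^sup>2" if x: "x \<in> \<Gamma>" for x
  proof -
    obtain c where c: "c \<in> K" "l2dist c x < \<eta>/2"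
      using K(3) x by auto
    have c_l2: "c \<in> l2" and x_l2: "x \<in> l2" using c K(2) \<Gamma> x by auto
    have "(\<Sum>\<^sub>\<infinity>i\<in>- A. (c i)\<^sup>2) \<le> (\<Sum>\<^sub>\<infinity>i\<in>- B c. (c i)\<^sup>2)"
      using c(1) c_l2 by (intro infsum_mono2 l2_square_summable_on) (auto simp: A_def)
    then have "(\<Sum>\<^sub>\<infinity>i\<in>- A. (c i)\<^sup>2) \<le> (\<eta>/2)\<^sup>2"
      using B[OF c(1)] by linarith
    then have "sqrt (\<Sum>\<^sub>\<infinity>i\<in>- A. (c i)\<^sup>2) \<le> \<eta>/2"
      using real_sqrt_le_mono \<eta> by fastforce
    then have "sqrt (\<Sum>\<^sub>\<infinity>i\<in>- A. (x i)\<^sup>2) \<le> \<eta>"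
      using l2_tail_le_dist_plus_tail[OF x_l2 c_l2, of "- A"] c(2) by linarith
    moreover have nonneg: "0 \<le> (\<Sum>\<^sub>\<infinity>i\<in>- A. (x i)\<^sup>2)"
      by (rule infsum_nonneg) simp
    ultimately show ?thesis
      using power_mono[OF _ real_sqrt_ge_zero[OF nonneg], of \<eta> 2] by simp
  qed
  moreover have "finite A"
    unfolding A_def using K(1) B by auto
  ultimately show ?thesis using that by blast
qed

lemma kolmogorov_width_kolmogorov_dim_le:
  assumes "l2_compact \<Gamma>" "\<delta> > 0"
  shows "kolmogorov_width \<Gamma> (kolmogorov_dim \<Gamma> \<delta>) \<le> ereal \<delta>"
proof -
  obtain A where "finite A" "\<And>x. x \<in> \<Gamma> \<Longrightarrow> (\<Sum>\<^sub>\<infinity>i\<in>- A. (x i)\<^sup>2) \<le> \<delta>\<^sup>2"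
    using l2_compact_uniform_tails[OF assms] by blast
  then have "kolmogorov_width \<Gamma> (card A) \<le> ereal \<delta>"
    by (rule kolmogorov_width_le_coord_tail) (use assms(2) in auto)
  then show ?thesis
    unfolding kolmogorov_dim_def by (rule LeastI)
qed

theorem mainTheorem13:
  fixes \<Gamma> :: "('i::countable \<Rightarrow> real) set" and \<epsilon> :: real
  assumes "orthosymmetric \<Gamma>" and "convex_fun_set \<Gamma>" and "l2_compact \<Gamma>"
    and "\<epsilon> > 0"
  shows "real (kolmogorov_dim \<Gamma> (\<epsilon> / real (coord_kolmogorov_dim \<Gamma> \<epsilon>)))
           \<ge> real (coord_kolmogorov_dim \<Gamma> \<epsilon>) / 2 - 2"
proof -
  define m where "m = coord_kolmogorov_dim \<Gamma> \<epsilon>"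
  define \<delta> where "\<delta> = \<epsilon> / real m"
  show ?thesis
  proof (cases "m \<le> 2")
    case True
    then show ?thesis unfolding m_def[symmetric] by simp
  next
    case False
    then have "0 < \<delta>" "\<delta> < \<epsilon> / 2"
      unfolding \<delta>_def using \<open>\<epsilon> > 0\<close> divide_strict_left_mono[of 2 "real m" \<epsilon>] by auto
    then have "kolmogorov_width \<Gamma> (kolmogorov_dim \<Gamma> \<delta>) < ereal (\<epsilon> / 2)"
      using kolmogorov_width_kolmogorov_dim_le[OF \<open>l2_compact \<Gamma>\<close>, of \<delta>]
      by (simp add: le_less_trans)
    moreover have "2 * (\<epsilon> / 2)\<^sup>2 \<le> \<epsilon>\<^sup>2"
      by (simp add: power_divide)
    ultimately have "m \<le> 2 * kolmogorov_dim \<Gamma> \<delta>"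
      unfolding m_def using assms(1,2) l2_compact_subset[OF assms(3)]
      by (intro coord_kolmogorov_dim_le_twice)
    then show ?thesis
      unfolding m_def[symmetric] \<delta>_def[symmetric] by simp
  qed
qed

end
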